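(* Let $m,d$ be integers with $3\leq m<d$. Let $\mathcal{H}_A=\mathbb{C}^m\otimes\mathbb{C}^d$ and $\mathcal{H}_B=\mathbb{C}^m\otimes\mathbb{C}^d$. Let $F_m$ denote the swap of Alice's and Bob's $\mathbb{C}^m$ factors and $F_d$ the swap of Alice's and Bob's $\mathbb{C}^d$ factors, and $\mathbb{1}_m,\mathbb{1}_d$ the corresponding identities on $\mathbb{C}^m\otimes\mathbb{C}^m$ and $\mathbb{C}^d\otimes\mathbb{C}^d$. For real $\epsilon,\delta$ let $$\rho=\mathbb{1}_m\otimes\mathbb{1}_d+\frac{d\epsilon-1}{d}\,\mathbb{1}_m\otimes F_d+\frac{m\epsilon-1}{m}\,F_m\otimes\mathbb{1}_d+\frac{1-(m+d)\epsilon+dm\delta}{dm}\,F_m\otimes F_d,$$ and assume $\rho$ is positive semidefinite. If $$\epsilon m^2(d^2-1)+dm\delta(m-d)<0,$$ then $\rho$ is entangled, i.e. not a nonnegative combination of product operators $\rho^A\otimes\rho^B$ with $\rho^A\geq0$ on $\mathcal{H}_A$ and $\rho^B\geq 0$ on $\mathcal{H}_B$.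
   Context: A swap operator on $\mathbb{C}^k\otimes\mathbb{C}^k$ is $\sum_{i,j}|ij\rangle\langle ji|$; here $F_m$ and $F_d$ act on the pair of $\mathbb{C}^m$ factors and the pair of $\mathbb{C}^d$ factors respectively (one factor of each pair belonging to Alice and one to Bob), and the tensor products above are with respect to this regrouping of $\mathcal{H}_A\otimes\mathcal{H}_B$. *)

theory Defs
  imports "Jordan_Normal_Form.Matrix" "Jordan_Normal_Form.Conjugate"
begin

text \<open>A basis vector |i> of C^k is index i < k; a basis vector |i j> of
  C^k (x) C^l is index i*l + j (standard Kronecker ordering).\<close>

definition kron :: "complex mat \<Rightarrow> complex mat \<Rightarrow> complex mat" where
  "kron A B = mat (dim_row A * dim_row B) (dim_col A * dim_col B)
     (\<lambda>(i,j). A $$ (i div dim_row B, j div dim_col B) * B $$ (i mod dim_row B, j mod dim_col B))"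

text \<open>Swap operator on C^k (x) C^k:  sum_{i,j} |i j><j i|.\<close>
definition swap_op :: "nat \<Rightarrow> complex mat" where
  "swap_op k = mat (k*k) (k*k)
     (\<lambda>(r,c). if r div k = c mod k \<and> r mod k = c div k then 1 else 0)"

definition psd :: "nat \<Rightarrow> complex mat \<Rightarrow> bool" where
  "psd n A \<longleftrightarrow> A \<in> carrier_mat n n \<and>
     (\<forall>i<n. \<forall>j<n. A $$ (i,j) = cnj (A $$ (j,i))) \<and>
     (\<forall>v \<in> carrier_vec n. Im (conjugate v \<bullet> (A *\<^sub>v v)) = 0 \<and> Re (conjugate v \<bullet> (A *\<^sub>v v)) \<ge> 0)"

text \<open>The space (C^m (x) C^m) (x) (C^d (x) C^d), with basis |a1 b1 a2 b2>
  (a1,b1 < m the C^m factors of Alice/Bob, a2,b2 < d the C^d factors of Alice/Bob), has index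
  (a1*m + b1)*(d*d) + (a2*d + b2).  The space H_A (x) H_B = (C^m (x) C^d) (x) (C^m (x) C^d),
  with basis |a1 a2 b1 b2>, has index (a1*d + a2)*(m*d) + (b1*d + b2).
  regroup_idx maps the first index to the second.\<close>
definition regroup_idx :: "nat \<Rightarrow> nat \<Rightarrow> nat \<Rightarrow> nat" where
  "regroup_idx m d r =
     (let x = r div (d*d); y = r mod (d*d);
          a1 = x div m; b1 = x mod m; a2 = y div d; b2 = y mod d
      in (a1*d + a2)*(m*d) + (b1*d + b2))"

definition regroup_mat :: "nat \<Rightarrow> nat \<Rightarrow> complex mat" where
  "regroup_mat m d = mat (m*d*(m*d)) (m*m*(d*d))
     (\<lambda>(s,r). if s = regroup_idx m d r then 1 else 0)"

definition regroup :: "nat \<Rightarrow> nat \<Rightarrow> complex mat \<Rightarrow> complex mat" where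
  "regroup m d X = regroup_mat m d * X * transpose_mat (regroup_mat m d)"

definition rho_op :: "nat \<Rightarrow> nat \<Rightarrow> real \<Rightarrow> real \<Rightarrow> complex mat" where
  "rho_op m d \<epsilon> \<delta> = regroup m d
     (kron (1\<^sub>m (m*m)) (1\<^sub>m (d*d))
      + complex_of_real ((d*\<epsilon> - 1)/d) \<cdot>\<^sub>m kron (1\<^sub>m (m*m)) (swap_op d)
      + complex_of_real ((m*\<epsilon> - 1)/m) \<cdot>\<^sub>m kron (swap_op m) (1\<^sub>m (d*d))
      + complex_of_real ((1 - (m+d)*\<epsilon> + d*m*\<delta>)/(d*m)) \<cdot>\<^sub>m kron (swap_op m) (swap_op d))"

text \<open>Separable operator on H_A (x) H_B with dim H_A = nA, dim H_B = nB: a finite sum of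
  products rho_A (x) rho_B of positive semidefinite operators (nonnegative coefficients are
  absorbed into the PSD factors).\<close>
definition separable :: "nat \<Rightarrow> nat \<Rightarrow> complex mat \<Rightarrow> bool" where
  "separable nA nB \<rho> \<longleftrightarrow> (\<exists>xs :: (complex mat \<times> complex mat) list.
     (\<forall>(a,b) \<in> set xs. psd nA a \<and> psd nB b) \<and>
     \<rho> = foldr (\<lambda>(a,b) acc. kron a b + acc) xs (0\<^sub>m (nA*nB) (nA*nB)))"

end

theory Submission
  imports Defs
begin

text \<open>The witness is \<open>X \<mapsto> tr (X (m F\<^sub>m \<otimes> \<one>\<^sub>d - F\<^sub>m \<otimes> F\<^sub>d))\<close>. On a product
  \<open>A \<otimes> B\<close> it equals \<open>m tr (A\<^sub>m B\<^sub>m) - tr (A B)\<close>, where \<open>A\<^sub>m, B\<^sub>m\<close> are the partial traces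
  over \<open>\<complex>\<^sup>d\<close>. Every vector of \<open>\<complex>\<^sup>m \<otimes> \<complex>\<^sup>d\<close> is a sum of \<open>m\<close> product vectors, whence
  \<open>B \<le> m (B\<^sub>m \<otimes> \<one>\<^sub>d)\<close> for \<open>B \<ge> 0\<close>; as \<open>tr (A K) \<ge> 0\<close> for \<open>A, K \<ge> 0\<close>, this gives
  \<open>tr (A B) \<le> m tr (A\<^sub>m B\<^sub>m)\<close>. So the witness is nonnegative on separable operators, while
  its value at \<open>\<rho>\<close> is \<open>m (\<epsilon> m\<^sup>2 (d\<^sup>2 - 1) + d m \<delta> (m - d)) < 0\<close>.\<close>

section \<open>Kernels on finite index sets\<close>

definition sesq :: "'i set \<Rightarrow> ('i \<Rightarrow> 'i \<Rightarrow> complex) \<Rightarrow> ('i \<Rightarrow> complex) \<Rightarrow> ('i \<Rightarrow> complex) \<Rightarrow> complex" where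
  "sesq S M v w = (\<Sum>p\<in>S. \<Sum>q\<in>S. cnj (v p) * M p q * w q)"

definition hermitian_on :: "'i set \<Rightarrow> ('i \<Rightarrow> 'i \<Rightarrow> complex) \<Rightarrow> bool" where
  "hermitian_on S M \<longleftrightarrow> (\<forall>p\<in>S. \<forall>q\<in>S. M p q = cnj (M q p))"

text \<open>Unlike \<open>psd\<close>, \<open>psd_on\<close> does not include hermiticity (over \<open>\<complex>\<close> it is not implied by
  \<open>Re \<langle>v, M v\<rangle> \<ge> 0\<close>); it is assumed separately where needed.\<close>
definition psd_on :: "'i set \<Rightarrow> ('i \<Rightarrow> 'i \<Rightarrow> complex) \<Rightarrow> bool" where
  "psd_on S M \<longleftrightarrow> (\<forall>v. 0 \<le> Re (sesq S M v v))"

definition trace_prod :: "'i set \<Rightarrow> ('i \<Rightarrow> 'i \<Rightarrow> complex) \<Rightarrow> ('i \<Rightarrow> 'i \<Rightarrow> complex) \<Rightarrow> complex" where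
  "trace_prod S M N = (\<Sum>p\<in>S. \<Sum>q\<in>S. M p q * N q p)"

definition ptrace2 :: "'b set \<Rightarrow> ('a \<times> 'b \<Rightarrow> 'a \<times> 'b \<Rightarrow> complex) \<Rightarrow> 'a \<Rightarrow> 'a \<Rightarrow> complex" where
  "ptrace2 D M i j = (\<Sum>z\<in>D. M (i,z) (j,z))"

definition kron_id :: "('a \<Rightarrow> 'a \<Rightarrow> complex) \<Rightarrow> 'a \<times> 'b \<Rightarrow> 'a \<times> 'b \<Rightarrow> complex" where
  "kron_id M = (\<lambda>(i,x) (j,y). if x = y then M i j else 0)"

definition inner_fun :: "'b set \<Rightarrow> ('b \<Rightarrow> complex) \<Rightarrow> ('b \<Rightarrow> complex) \<Rightarrow> complex" where
  "inner_fun D f h = (\<Sum>x\<in>D. cnj (f x) * h x)"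

lemma sesq_add_left: "sesq S M (\<lambda>p. v p + w p) z = sesq S M v z + sesq S M w z"
  by (simp add: sesq_def algebra_simps sum.distrib)

lemma sesq_add_right: "sesq S M z (\<lambda>p. v p + w p) = sesq S M z v + sesq S M z w"
  by (simp add: sesq_def algebra_simps sum.distrib)

lemma sesq_scale_left: "sesq S M (\<lambda>p. c * v p) z = cnj c * sesq S M v z"
  by (simp add: sesq_def sum_distrib_left algebra_simps)

lemma sesq_scale_right: "sesq S M z (\<lambda>p. c * v p) = c * sesq S M z v"
  by (simp add: sesq_def sum_distrib_left algebra_simps)

lemma sesq_linear_combination:
  "sesq S M (\<lambda>p. a * v p + b * w p) (\<lambda>p. a * v p + b * w p) =
   cnj a * a * sesq S M v v + cnj a * b * sesq S M v w + cnj b * a * sesq S M w v + cnj b * b * sesq S M w w"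
  by (simp add: sesq_add_left sesq_add_right sesq_scale_left sesq_scale_right algebra_simps)

lemma sesq_diff_kernel: "sesq S (\<lambda>p q. c * M p q - N p q) v w = c * sesq S M v w - sesq S N v w"
  by (simp add: sesq_def sum_distrib_left algebra_simps sum_subtractf)

lemma sesq_cong:
  "(\<And>p. p \<in> S \<Longrightarrow> v p = v' p) \<Longrightarrow> (\<And>p. p \<in> S \<Longrightarrow> w p = w' p) \<Longrightarrow> sesq S M v w = sesq S M v' w'"
  unfolding sesq_def by (intro sum.cong) auto

lemma sesq_zero_vector: "(\<And>p. p \<in> S \<Longrightarrow> v p = 0) \<Longrightarrow> sesq S M v v = 0"
  unfolding sesq_def by simp

lemma sesq_indicator_left:
  assumes "finite S" "k \<in> S"
  shows "sesq S M (\<lambda>t. if t = k then 1 else 0) v = (\<Sum>q\<in>S. M k q * v q)"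
proof -
  have "sesq S M (\<lambda>t. if t = k then 1 else 0) v = (\<Sum>p\<in>S. if p = k then (\<Sum>q\<in>S. M p q * v q) else 0)"
    unfolding sesq_def by (auto intro!: sum.cong)
  then show ?thesis using assms by simp
qed

lemma sesq_indicator_right:
  assumes "finite S" "k \<in> S"
  shows "sesq S M v (\<lambda>t. if t = k then 1 else 0) = (\<Sum>p\<in>S. cnj (v p) * M p k)"
proof -
  have "sesq S M v (\<lambda>t. if t = k then 1 else 0) = (\<Sum>p\<in>S. \<Sum>q\<in>S. if q = k then cnj (v p) * M p q else 0)"
    unfolding sesq_def by (auto intro!: sum.cong)
  then show ?thesis using assms by simp
qed

lemma sesq_indicators:
  assumes "finite S" "k \<in> S" "l \<in> S"
  shows "sesq S M (\<lambda>t. if t = k then 1 else 0) (\<lambda>t. if t = l then 1 else 0) = M k l"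
  using assms by (simp add: sesq_indicator_left if_distrib[of "(*) _"] cong: if_cong)

lemma inner_fun_self: "inner_fun D f f = of_real (\<Sum>x\<in>D. (cmod (f x))\<^sup>2)"
  unfolding inner_fun_def of_real_sum by (intro sum.cong refl) (metis complex_norm_square mult.commute)

lemma inner_fun_diff: "inner_fun D f (\<lambda>x. h x - c * f x) = inner_fun D f h - c * inner_fun D f f"
  unfolding inner_fun_def by (simp add: algebra_simps sum_subtractf sum_distrib_left)

text \<open>Add the nonnegative value of the form at \<open>t v - w / t\<close>, where \<open>t\<^sup>2 = n\<close>.\<close>
lemma psd_on_sesq_add_le:
  fixes n :: real
  assumes "n > 0" and "psd_on S M"
  shows "Re (sesq S M (\<lambda>p. v p + w p) (\<lambda>p. v p + w p))
    \<le> (1 + n) * Re (sesq S M v v) + (1 + 1/n) * Re (sesq S M w w)"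
proof -
  define t where "t = sqrt n"
  have t: "t \<noteq> 0" "t\<^sup>2 = n" using assms(1) by (auto simp: t_def)
  let ?u = "\<lambda>p. of_real t * v p + of_real (-1/t) * w p"
  have "sesq S M (\<lambda>p. v p + w p) (\<lambda>p. v p + w p) = sesq S M (\<lambda>p. 1 * v p + 1 * w p) (\<lambda>p. 1 * v p + 1 * w p)"
    by simp
  also have "\<dots> = sesq S M v v + sesq S M v w + sesq S M w v + sesq S M w w"
    unfolding sesq_linear_combination by simp
  finally have sum: "Re (sesq S M (\<lambda>p. v p + w p) (\<lambda>p. v p + w p))
      = Re (sesq S M v v + sesq S M v w + sesq S M w v + sesq S M w w)" by simp
  have "sesq S M ?u ?u = of_real (t*t) * sesq S M v v - sesq S M v w - sesq S M w v
      + of_real (1/(t*t)) * sesq S M w w"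
    unfolding sesq_linear_combination using t by (simp add: field_simps)
  moreover have "0 \<le> Re (sesq S M ?u ?u)" using assms(2) unfolding psd_on_def by blast
  ultimately show ?thesis using t unfolding sum by (simp add: power2_eq_square distrib_right)
qed

lemma psd_on_sesq_add_le_compare:
  fixes n :: real
  assumes "n > 0" "psd_on S M"
    and "Re (sesq S M v v) \<le> Re (sesq S N v v)" "Re (sesq S M w w) \<le> n * Re (sesq S N w w)"
  shows "Re (sesq S M (\<lambda>p. v p + w p) (\<lambda>p. v p + w p)) \<le> (1 + n) * Re (sesq S N v v + sesq S N w w)"
proof -
  have "Re (sesq S M (\<lambda>p. v p + w p) (\<lambda>p. v p + w p))
      \<le> (1 + n) * Re (sesq S M v v) + (1 + 1 / n) * Re (sesq S M w w)"
    by (rule psd_on_sesq_add_le[OF assms(1,2)])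
  also have "\<dots> \<le> (1 + n) * Re (sesq S N v v) + (1 + 1 / n) * (n * Re (sesq S N w w))"
    using assms by (intro add_mono mult_left_mono) auto
  also have "\<dots> = (1 + n) * Re (sesq S N v v + sesq S N w w)"
    using assms(1) by (simp add: field_simps)
  finally show ?thesis .
qed

text \<open>Sum the nonnegative values of the form at the vectors \<open>cnj (f w) e\<^sub>z - cnj (f z) e\<^sub>w\<close>.\<close>
lemma psd_on_sesq_le_norm_trace:
  assumes fin: "finite D" and psd: "psd_on D M"
  shows "Re (sesq D M f f) \<le> (\<Sum>x\<in>D. (cmod (f x))\<^sup>2) * Re (\<Sum>z\<in>D. M z z)"
proof -
  define e :: "'a \<Rightarrow> 'a \<Rightarrow> complex" where "e = (\<lambda>z t. if t = z then 1 else 0)"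
  define u where "u = (\<lambda>z w t. cnj (f w) * e z t + (- cnj (f z)) * e w t)"
  define N where "N = inner_fun D f f"
  define T where "T = (\<Sum>z\<in>D. M z z)"
  have u: "sesq D M (u z w) (u z w) = f w * cnj (f w) * M z z - cnj (f z) * M z w * f w
      - cnj (f w) * M w z * f z + f z * cnj (f z) * M w w" if "z \<in> D" "w \<in> D" for z w
    unfolding u_def sesq_linear_combination e_def using fin that by (simp add: sesq_indicators algebra_simps)
  have "(\<Sum>z\<in>D. \<Sum>w\<in>D. sesq D M (u z w) (u z w)) = 2 * N * T - 2 * sesq D M f f"
  proof -
    have NT: "(\<Sum>z\<in>D. \<Sum>w\<in>D. f w * cnj (f w) * M z z) = N * T"
      "(\<Sum>z\<in>D. \<Sum>w\<in>D. f z * cnj (f z) * M w w) = N * T"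
      unfolding N_def T_def inner_fun_def sum_product by (subst sum.swap, simp add: algebra_simps)+
    have "(\<Sum>z\<in>D. \<Sum>w\<in>D. cnj (f w) * M w z * f z) = sesq D M f f"
      unfolding sesq_def by (rule sum.swap)
    then show ?thesis
      by (simp add: u sum_subtractf sum.distrib NT flip: sesq_def)
  qed
  moreover have "0 \<le> Re (\<Sum>z\<in>D. \<Sum>w\<in>D. sesq D M (u z w) (u z w))"
    using psd unfolding psd_on_def by (simp add: sum_nonneg)
  ultimately show ?thesis unfolding N_def T_def inner_fun_self by simp
qed

section \<open>Product vectors and the Schmidt rank bound\<close>

lemma sesq_tensor_vector:
  "sesq (A \<times> D) M (\<lambda>(i,x). g i * h x) (\<lambda>(i,x). g i * h x)
   = sesq D (\<lambda>z w. \<Sum>i\<in>A. \<Sum>j\<in>A. cnj (g i) * M (i,z) (j,w) * g j) h h"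
proof -
  have "sesq (A \<times> D) M (\<lambda>(i,x). g i * h x) (\<lambda>(i,x). g i * h x)
     = (\<Sum>i\<in>A. \<Sum>z\<in>D. \<Sum>j\<in>A. \<Sum>w\<in>D. cnj (h z) * (cnj (g i) * M (i,z) (j,w) * g j) * h w)"
    unfolding sesq_def sum.cartesian_product' sum_distrib_right by (simp add: algebra_simps)
  also have "\<dots> = (\<Sum>z\<in>D. \<Sum>w\<in>D. \<Sum>i\<in>A. \<Sum>j\<in>A. cnj (h z) * (cnj (g i) * M (i,z) (j,w) * g j) * h w)"
    by (subst sum.swap, intro sum.cong refl, subst sum.swap, intro sum.cong refl, rule sum.swap)
  also have "\<dots> = sesq D (\<lambda>z w. \<Sum>i\<in>A. \<Sum>j\<in>A. cnj (g i) * M (i,z) (j,w) * g j) h h"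
    unfolding sesq_def by (simp add: sum_distrib_left sum_distrib_right)
  finally show ?thesis .
qed

lemma sesq_kron_id:
  assumes "finite D"
  shows "sesq (A \<times> D) (kron_id M) v w
    = (\<Sum>i\<in>A. \<Sum>j\<in>A. M i j * inner_fun D (\<lambda>x. v (i,x)) (\<lambda>x. w (j,x)))"
proof -
  have "sesq (A \<times> D) (kron_id M) v w
      = (\<Sum>i\<in>A. \<Sum>x\<in>D. \<Sum>j\<in>A. \<Sum>y\<in>D. if x = y then cnj (v (i,x)) * M i j * w (j,y) else 0)"
    unfolding sesq_def sum.cartesian_product' kron_id_def by (intro sum.cong refl) auto
  also have "\<dots> = (\<Sum>i\<in>A. \<Sum>x\<in>D. \<Sum>j\<in>A. cnj (v (i,x)) * M i j * w (j,x))"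
    using assms by simp
  also have "\<dots> = (\<Sum>i\<in>A. \<Sum>j\<in>A. \<Sum>x\<in>D. cnj (v (i,x)) * M i j * w (j,x))"
    by (intro sum.cong refl, rule sum.swap)
  finally show ?thesis
    unfolding inner_fun_def by (simp add: sum_distrib_left algebra_simps)
qed

lemma psd_on_sesq_tensor_le:
  assumes "finite D" and psd: "psd_on (A \<times> D) M" and unit: "(\<Sum>x\<in>D. (cmod (f x))\<^sup>2) = 1"
  shows "Re (sesq (A \<times> D) M (\<lambda>(i,x). g i * f x) (\<lambda>(i,x). g i * f x))
    \<le> Re (sesq (A \<times> D) (kron_id (ptrace2 D M)) (\<lambda>(i,x). g i * f x) (\<lambda>(i,x). g i * f x))"
proof -
  define C where "C = (\<lambda>z w. \<Sum>i\<in>A. \<Sum>j\<in>A. cnj (g i) * M (i,z) (j,w) * g j)"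
  have "psd_on D C"
    using psd unfolding psd_on_def C_def sesq_tensor_vector[symmetric] by blast
  then have "Re (sesq D C f f) \<le> Re (\<Sum>z\<in>D. C z z)"
    using psd_on_sesq_le_norm_trace[OF \<open>finite D\<close>, of C f] unit by simp
  also have "(\<Sum>z\<in>D. C z z) = (\<Sum>i\<in>A. \<Sum>j\<in>A. ptrace2 D M i j * (cnj (g i) * g j))"
    unfolding C_def ptrace2_def sum_distrib_right
    by (subst sum.swap, intro sum.cong refl, subst sum.swap) (simp add: algebra_simps)
  also have "\<dots> = sesq (A \<times> D) (kron_id (ptrace2 D M)) (\<lambda>(i,x). g i * f x) (\<lambda>(i,x). g i * f x)"
  proof -
    have "inner_fun D (\<lambda>x. g i * f x) (\<lambda>x. g j * f x) = cnj (g i) * g j * inner_fun D f f" for i j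
      unfolding inner_fun_def by (simp add: sum_distrib_left algebra_simps)
    then have "inner_fun D (\<lambda>x. g i * f x) (\<lambda>x. g j * f x) = cnj (g i) * g j" for i j
      using unit by (simp add: inner_fun_self)
    then show ?thesis by (simp add: sesq_kron_id[OF \<open>finite D\<close>])
  qed
  finally show ?thesis unfolding C_def sesq_tensor_vector .
qed

lemma exists_unit_vector_multiple:
  assumes "finite D" and "x0 \<in> D"
  shows "\<exists>f. (\<Sum>x\<in>D. (cmod (f x))\<^sup>2) = 1 \<and> (\<forall>x\<in>D. h x = inner_fun D f h * f x)"
proof (cases "\<forall>x\<in>D. h x = 0")
  case True
  define f where "f = (\<lambda>x. if x = x0 then (1::complex) else 0)"
  have "(\<Sum>x\<in>D. (cmod (f x))\<^sup>2) = 1"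
    unfolding f_def using assms by (simp add: if_distrib[of "\<lambda>z. (cmod z)\<^sup>2"] cong: if_cong)
  moreover have "inner_fun D f h = 0" unfolding inner_fun_def using True by simp
  ultimately show ?thesis using True by (intro exI[of _ f]) simp
next
  case False
  define N where "N = (\<Sum>x\<in>D. (cmod (h x))\<^sup>2)"
  have "N \<noteq> 0"
    using False sum_nonneg_eq_0_iff[OF \<open>finite D\<close>, of "\<lambda>x. (cmod (h x))\<^sup>2"] unfolding N_def by auto
  then have N: "N > 0" unfolding N_def by (simp add: sum_nonneg order_less_le)
  define f where "f = (\<lambda>x. h x / of_real (sqrt N))"
  have "(\<Sum>x\<in>D. (cmod (f x))\<^sup>2) = N / (sqrt N)\<^sup>2"
    unfolding f_def N_def by (simp add: norm_divide power_divide sum_divide_distrib)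
  then have "(\<Sum>x\<in>D. (cmod (f x))\<^sup>2) = 1" using N by simp
  moreover have "inner_fun D f h = of_real (sqrt N)"
  proof -
    have "inner_fun D f h = inner_fun D h h / of_real (sqrt N)"
      unfolding inner_fun_def f_def by (simp add: sum_divide_distrib)
    also have "\<dots> = of_real (N / sqrt N)" unfolding inner_fun_self N_def by simp
    finally show ?thesis using N by (simp add: real_div_sqrt)
  qed
  moreover have "\<forall>x\<in>D. h x = of_real (sqrt N) * f x" unfolding f_def using N by simp
  ultimately show ?thesis by metis
qed

lemma sesq_kron_id_orthogonal_sum:
  fixes g :: "'a \<Rightarrow> complex"
  assumes "finite D" and orth: "\<And>i. i \<in> A \<Longrightarrow> inner_fun D f (\<lambda>x. u (i,x)) = 0"
  defines "t \<equiv> \<lambda>(i,x). g i * f x"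
  shows "sesq (A \<times> D) (kron_id M) (\<lambda>p. t p + u p) (\<lambda>p. t p + u p)
    = sesq (A \<times> D) (kron_id M) t t + sesq (A \<times> D) (kron_id M) u u"
proof -
  have "inner_fun D (\<lambda>x. t (i,x)) (\<lambda>x. u (j,x)) = cnj (g i) * inner_fun D f (\<lambda>x. u (j,x))"
    "inner_fun D (\<lambda>x. u (j,x)) (\<lambda>x. t (i,x)) = g i * cnj (inner_fun D f (\<lambda>x. u (j,x)))" for i j
    unfolding inner_fun_def t_def by (simp_all add: sum_distrib_left algebra_simps)
  then have "sesq (A \<times> D) (kron_id M) t u = 0" "sesq (A \<times> D) (kron_id M) u t = 0"
    by (simp_all add: sesq_kron_id[OF \<open>finite D\<close>] orth)
  then show ?thesis by (simp add: sesq_add_left sesq_add_right)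
qed

lemma tensor_sum_split_off_product:
  assumes "finite D" "x0 \<in> D" "finite K" "k \<notin> K"
    and u: "\<And>i x. i \<in> A \<Longrightarrow> x \<in> D \<Longrightarrow> u (i,x) = (\<Sum>l\<in>insert k K. g l i * h l x)"
  obtains f g' h' where "(\<Sum>x\<in>D. (cmod (f x))\<^sup>2) = 1"
    and "\<And>i x. i \<in> A \<Longrightarrow> x \<in> D \<Longrightarrow> u (i,x) = g' i * f x + (\<Sum>l\<in>K. g l i * h' l x)"
    and "\<And>l. inner_fun D f (h' l) = 0"
proof -
  obtain f where unit: "(\<Sum>x\<in>D. (cmod (f x))\<^sup>2) = 1"
    and hk: "\<forall>x\<in>D. h k x = inner_fun D f (h k) * f x"
    using exists_unit_vector_multiple[OF assms(1,2)] by blast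
  define h' where "h' = (\<lambda>l x. h l x - inner_fun D f (h l) * f x)"
  define g' where "g' = (\<lambda>i. \<Sum>l\<in>insert k K. inner_fun D f (h l) * g l i)"
  have "u (i,x) = g' i * f x + (\<Sum>l\<in>K. g l i * h' l x)" if "i \<in> A" "x \<in> D" for i x
  proof -
    have "u (i,x) = (\<Sum>l\<in>insert k K. g l i * (inner_fun D f (h l) * f x + h' l x))"
      using u that unfolding h'_def by simp
    also have "\<dots> = g' i * f x + (\<Sum>l\<in>insert k K. g l i * h' l x)"
      unfolding g'_def sum_distrib_right by (simp add: algebra_simps sum.distrib)
    also have "(\<Sum>l\<in>insert k K. g l i * h' l x) = (\<Sum>l\<in>K. g l i * h' l x)"
      using hk that assms(3,4) unfolding h'_def by simp
    finally show ?thesis .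
  qed
  moreover have "inner_fun D f (h' l) = 0" for l
    using inner_fun_diff[of D f "h l"] unit unfolding h'_def by (simp add: inner_fun_self)
  ultimately show thesis using that unit by blast
qed

text \<open>Induction on the number of product terms of \<open>u\<close>: the split-off product vector and
  the remainder are orthogonal for \<open>kron_id\<close>, so the right-hand side is additive.\<close>
lemma psd_on_sesq_le_tensor_rank:
  assumes "finite D" "x0 \<in> D" and psd: "psd_on (A \<times> D) M" and "finite K"
    and u: "\<And>i x. i \<in> A \<Longrightarrow> x \<in> D \<Longrightarrow> u (i,x) = (\<Sum>k\<in>K. g k i * h k x)"
  shows "Re (sesq (A \<times> D) M u u) \<le> card K * Re (sesq (A \<times> D) (kron_id (ptrace2 D M)) u u)"
  using \<open>finite K\<close> u
proof (induction K arbitrary: u h rule: finite_induct)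
  case empty
  then have "sesq (A \<times> D) M u u = 0" "sesq (A \<times> D) (kron_id (ptrace2 D M)) u u = 0"
    by (auto intro!: sesq_zero_vector)
  then show ?case by simp
next
  case (insert k K)
  let ?P = "kron_id (ptrace2 D M)"
  obtain f g' h' where unit: "(\<Sum>x\<in>D. (cmod (f x))\<^sup>2) = 1"
    and split: "\<And>i x. i \<in> A \<Longrightarrow> x \<in> D \<Longrightarrow> u (i,x) = g' i * f x + (\<Sum>l\<in>K. g l i * h' l x)"
    and h'_orth: "\<And>l. inner_fun D f (h' l) = 0"
    using tensor_sum_split_off_product[where g = g and h = h, OF assms(1,2) insert.hyps insert.prems]
    by blast
  define t where "t = (\<lambda>(i,x). g' i * f x)"
  define u' where "u' = (\<lambda>(i,x). \<Sum>l\<in>K. g l i * h' l x)"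
  have u_split: "sesq (A \<times> D) N u u = sesq (A \<times> D) N (\<lambda>p. t p + u' p) (\<lambda>p. t p + u' p)" for N
    by (rule sesq_cong) (auto simp: split t_def u'_def)
  have "inner_fun D f (\<lambda>x. u' (i,x)) = (\<Sum>l\<in>K. g l i * inner_fun D f (h' l))" for i
    unfolding u'_def inner_fun_def by (simp add: sum_distrib_left algebra_simps) (rule sum.swap)
  then have P_split: "sesq (A \<times> D) ?P u u = sesq (A \<times> D) ?P t t + sesq (A \<times> D) ?P u' u'"
    unfolding u_split t_def by (intro sesq_kron_id_orthogonal_sum[OF assms(1)]) (simp add: h'_orth)
  have t_le: "Re (sesq (A \<times> D) M t t) \<le> Re (sesq (A \<times> D) ?P t t)"
    unfolding t_def by (rule psd_on_sesq_tensor_le[OF assms(1) psd unit])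
  have u'_le: "Re (sesq (A \<times> D) M u' u') \<le> card K * Re (sesq (A \<times> D) ?P u' u')"
    by (rule insert.IH) (simp add: u'_def)
  show ?case
  proof (cases "K = {}")
    case True
    then have "sesq (A \<times> D) N u' u' = 0" "sesq (A \<times> D) N u' t = 0" "sesq (A \<times> D) N t u' = 0" for N
      unfolding sesq_def u'_def by simp_all
    then show ?thesis
      using t_le True unfolding u_split P_split by (simp add: sesq_add_left sesq_add_right)
  next
    case False
    then have "real (card K) > 0" using insert.hyps by auto
    then have "Re (sesq (A \<times> D) M u u) \<le> (1 + real (card K)) * Re (sesq (A \<times> D) ?P t t + sesq (A \<times> D) ?P u' u')"
      unfolding u_split by (rule psd_on_sesq_add_le_compare[OF _ psd t_le u'_le])
    then show ?thesis using insert.hyps unfolding P_split by simp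
  qed
qed

text \<open>Every vector of \<open>\<complex>\<^sup>A \<otimes> \<complex>\<^sup>D\<close> is a sum of \<open>card A\<close> product vectors.\<close>
lemma psd_on_le_card_kron_id_ptrace2:
  assumes "finite A" "finite D" "D \<noteq> {}" and "psd_on (A \<times> D) M"
  shows "Re (sesq (A \<times> D) M u u) \<le> card A * Re (sesq (A \<times> D) (kron_id (ptrace2 D M)) u u)"
proof -
  obtain x0 where "x0 \<in> D" using assms(3) by blast
  have decomp: "u (i,x) = (\<Sum>k\<in>A. (if i = k then 1 else 0) * u (k,x))" if "i \<in> A" for i x
  proof -
    have "(\<Sum>k\<in>A. (if i = k then 1 else 0) * u (k,x)) = (\<Sum>k\<in>A. if i = k then u (i,x) else 0)"
      by (intro sum.cong) auto
    then show ?thesis using assms(1) that by simp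
  qed
  show ?thesis
    by (rule psd_on_sesq_le_tensor_rank[where g = "\<lambda>k i. if i = k then 1 else 0" and h = "\<lambda>k x. u (k,x)",
          OF assms(2) \<open>x0 \<in> D\<close> assms(4,1) decomp])
qed

section \<open>Positivity of trace products\<close>

definition schur_compl :: "('i \<Rightarrow> 'i \<Rightarrow> complex) \<Rightarrow> 'i \<Rightarrow> 'i \<Rightarrow> 'i \<Rightarrow> complex" where
  "schur_compl M k = (\<lambda>p q. M p q - M p k * M k q / M k k)"

lemma hermitian_onD: "hermitian_on S M \<Longrightarrow> p \<in> S \<Longrightarrow> q \<in> S \<Longrightarrow> M p q = cnj (M q p)"
  unfolding hermitian_on_def by blast

lemma psd_on_diag_nonneg:
  assumes "finite S" "k \<in> S" "psd_on S M"
  shows "0 \<le> Re (M k k)"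
  using assms sesq_indicators[OF assms(1,2,2), of M] unfolding psd_on_def by metis

lemma hermitian_on_diag_real:
  assumes "hermitian_on S M" "k \<in> S"
  shows "M k k = of_real (Re (M k k))"
  using hermitian_onD[OF assms(1,2,2)] by (metis Reals_cnj_iff of_real_Re)

lemma psd_on_zero_diag_row:
  assumes "finite S" "k \<in> S" "j \<in> S" and psd: "psd_on S M" and herm: "hermitian_on S M"
    and "M k k = 0"
  shows "M k j = 0"
proof (rule ccontr)
  assume "M k j \<noteq> 0"
  define c where "c = (cmod (M k j))\<^sup>2"
  have "c > 0" using \<open>M k j \<noteq> 0\<close> unfolding c_def by simp
  have c: "cnj (M k j) * M k j = of_real c" unfolding c_def by (metis complex_norm_square mult.commute)
  have "j \<noteq> k" using \<open>M k j \<noteq> 0\<close> \<open>M k k = 0\<close> by blast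
  \<comment> \<open>The form at \<open>t e\<^sub>k + e\<^sub>j\<close> is affine in \<open>t\<close> and can be made negative.\<close>
  define r where "r = (\<bar>Re (M j j)\<bar> + 1) / (2 * c)"
  define t where "t = - of_real r * M k j"
  let ?e = "\<lambda>l s. if s = l then (1::complex) else 0"
  have "sesq S M (\<lambda>p. t * ?e k p + 1 * ?e j p) (\<lambda>p. t * ?e k p + 1 * ?e j p)
      = cnj t * M k j + t * M j k + M j j"
    unfolding sesq_linear_combination using assms(1-3,6) by (simp add: sesq_indicators)
  also have "\<dots> = of_real (- 2 * r * c) + M j j"
    using hermitian_onD[OF herm assms(3,2)] c unfolding t_def by (simp add: algebra_simps)
  finally have "0 \<le> - 2 * r * c + Re (M j j)"
    using psd[unfolded psd_on_def, rule_format, of "\<lambda>p. t * ?e k p + 1 * ?e j p"] by simp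
  moreover have "2 * r * c = \<bar>Re (M j j)\<bar> + 1" unfolding r_def using \<open>c > 0\<close> by simp
  ultimately show False by linarith
qed

lemma hermitian_on_schur_compl:
  assumes "hermitian_on S M" "k \<in> S"
  shows "hermitian_on S (schur_compl M k)"
  unfolding hermitian_on_def schur_compl_def
proof (intro ballI)
  fix p q assume p: "p \<in> S" and q: "q \<in> S"
  have "M p q = cnj (M q p)" "M p k = cnj (M k p)" "M k q = cnj (M q k)" "cnj (M k k) = M k k"
    using hermitian_onD[OF assms(1) p q] hermitian_onD[OF assms(1) p assms(2)]
      hermitian_onD[OF assms(1) assms(2) q] hermitian_onD[OF assms(1) assms(2) assms(2)] by simp_all
  then show "M p q - M p k * M k q / M k k = cnj (M q p - M q k * M k p / M k k)"
    by (simp add: mult.commute)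
qed

text \<open>The form of the Schur complement at \<open>v\<close> is the form of \<open>M\<close> at
  \<open>v - (\<Sum>q. M k q v q / M k k) e\<^sub>k\<close>.\<close>
lemma psd_on_schur_compl:
  assumes "finite S" "k \<in> S" and psd: "psd_on S M" and herm: "hermitian_on S M" and "M k k \<noteq> 0"
  shows "psd_on S (schur_compl M k)"
  unfolding psd_on_def
proof
  fix v
  define e where "e = (\<lambda>s. if s = k then (1::complex) else 0)"
  define s where "s = (\<Sum>q\<in>S. M k q * v q)"
  define r where "r = (\<Sum>p\<in>S. cnj (v p) * M p k)"
  have Mkk: "cnj (M k k) = M k k" using hermitian_on_diag_real[OF herm assms(2)] by (metis complex_cnj_complex_of_real)
  have "cnj (v p) * M p k = cnj (M k q * v q)" if "p \<in> S" "q = p" for p q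
    using hermitian_onD[OF herm that(1) assms(2)] that(2) by simp
  then have rs: "r = cnj s"
    unfolding r_def s_def cnj_sum by (intro sum.cong) auto
  define t where "t = s / M k k"
  have "sesq S M v e = r" "sesq S M e v = s" "sesq S M e e = M k k"
    unfolding e_def r_def s_def
    by (rule sesq_indicator_right[OF assms(1,2)], rule sesq_indicator_left[OF assms(1,2)],
        rule sesq_indicators[OF assms(1,2,2)])
  then have "sesq S M (\<lambda>p. 1 * v p + (- t) * e p) (\<lambda>p. 1 * v p + (- t) * e p)
      = sesq S M v v - t * r - cnj t * s + cnj t * t * M k k"
    unfolding sesq_linear_combination by simp
  also have "\<dots> = sesq S M v v - r * s / M k k"
    unfolding t_def rs using Mkk \<open>M k k \<noteq> 0\<close> by (simp add: field_simps)
  also have "\<dots> = sesq S (schur_compl M k) v v"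
    unfolding sesq_def schur_compl_def r_def s_def sum_product
    by (simp add: sum_subtractf sum_divide_distrib algebra_simps)
  finally show "0 \<le> Re (sesq S (schur_compl M k) v v)"
    using psd unfolding psd_on_def by (metis (no_types))
qed

lemma trace_prod_schur_compl:
  assumes "hermitian_on S M" "k \<in> S"
  shows "trace_prod S M N = trace_prod S (schur_compl M k) N + sesq S N (\<lambda>p. M p k) (\<lambda>p. M p k) / M k k"
proof -
  have "(\<Sum>p\<in>S. \<Sum>q\<in>S. M p k * M k q * N q p) = sesq S N (\<lambda>p. M p k) (\<lambda>p. M p k)"
  proof -
    have "M p k * M k q * N q p = cnj (M q k) * N q p * M p k" if "q \<in> S" for p q
      using hermitian_onD[OF assms(1,2) that] by simp
    then have "(\<Sum>p\<in>S. \<Sum>q\<in>S. M p k * M k q * N q p) = (\<Sum>p\<in>S. \<Sum>q\<in>S. cnj (M q k) * N q p * M p k)"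
      by (intro sum.cong refl)
    also have "\<dots> = sesq S N (\<lambda>p. M p k) (\<lambda>p. M p k)" unfolding sesq_def by (rule sum.swap)
    finally show ?thesis .
  qed
  moreover have "trace_prod S (schur_compl M k) N
      = trace_prod S M N - (\<Sum>p\<in>S. \<Sum>q\<in>S. M p k * M k q * N q p) / M k k"
    unfolding trace_prod_def schur_compl_def
    by (simp add: left_diff_distrib sum_subtractf sum_divide_distrib)
  ultimately show ?thesis by simp
qed

text \<open>Induction on a set \<open>T\<close> containing the support of \<open>M\<close>: peeling off a diagonal entry
  by a Schur complement writes \<open>M\<close> as a positive multiple of a rank-one kernel plus a
  positive semidefinite kernel supported on a smaller set.\<close>
lemma trace_prod_nonneg_supported:
  assumes "finite S" "finite T" and psdN: "psd_on S N"
    and "hermitian_on S M" "psd_on S M" "\<forall>p\<in>S. \<forall>q\<in>S. M p q \<noteq> 0 \<longrightarrow> p \<in> T \<and> q \<in> T"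
  shows "0 \<le> Re (trace_prod S M N)"
  using \<open>finite T\<close> assms(4-6)
proof (induction T arbitrary: M rule: finite_induct)
  case empty
  then show ?case by (simp add: trace_prod_def)
next
  case (insert k T)
  consider "k \<notin> S" | "k \<in> S" "M k k = 0" | "k \<in> S" "M k k \<noteq> 0" by blast
  then show ?case
  proof cases
    case 1
    then show ?thesis using insert.prems by (intro insert.IH) auto
  next
    case 2
    have "M k j = 0" "M j k = 0" if "j \<in> S" for j
      using psd_on_zero_diag_row[OF assms(1) 2(1) that insert.prems(2,1) 2(2)]
        hermitian_onD[OF insert.prems(1) that 2(1)] by simp_all
    then show ?thesis using insert.prems by (intro insert.IH) auto
  next
    case 3
    have "p \<in> T \<and> q \<in> T" if "p \<in> S" "q \<in> S" "schur_compl M k p q \<noteq> 0" for p q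
    proof -
      have "p \<noteq> k" "q \<noteq> k" "M p q \<noteq> 0 \<or> (M p k \<noteq> 0 \<and> M k q \<noteq> 0)"
        using that(3) 3(2) unfolding schur_compl_def by auto
      then show ?thesis using insert.prems(3) that(1,2) 3(1) by blast
    qed
    then have "0 \<le> Re (trace_prod S (schur_compl M k) N)"
      by (intro insert.IH hermitian_on_schur_compl[OF insert.prems(1) 3(1)]
          psd_on_schur_compl[OF assms(1) 3(1) insert.prems(2,1) 3(2)]) blast
    moreover have "0 \<le> Re (sesq S N (\<lambda>p. M p k) (\<lambda>p. M p k) / M k k)"
    proof -
      have "M k k = of_real (Re (M k k))" "0 \<le> Re (M k k)"
        using hermitian_on_diag_real[OF insert.prems(1) 3(1)]
          psd_on_diag_nonneg[OF assms(1) 3(1) insert.prems(2)] by simp_all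
      moreover have "0 \<le> Re (sesq S N (\<lambda>p. M p k) (\<lambda>p. M p k))"
        using psdN unfolding psd_on_def by blast
      ultimately show ?thesis by (metis Re_divide_of_real divide_nonneg_nonneg)
    qed
    ultimately show ?thesis
      unfolding trace_prod_schur_compl[OF insert.prems(1) 3(1)] by simp
  qed
qed

lemma trace_prod_nonneg:
  assumes "finite S" "psd_on S N" "hermitian_on S M" "psd_on S M"
  shows "0 \<le> Re (trace_prod S M N)"
  using trace_prod_nonneg_supported[OF assms(1,1,2,3,4)] by blast

lemma trace_prod_kron_id:
  assumes "finite D"
  shows "trace_prod (A \<times> D) M (kron_id N) = trace_prod A (ptrace2 D M) N"
proof -
  have "trace_prod (A \<times> D) M (kron_id N)
      = (\<Sum>i\<in>A. \<Sum>x\<in>D. \<Sum>j\<in>A. \<Sum>y\<in>D. if y = x then M (i,x) (j,y) * N j i else 0)"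
    unfolding trace_prod_def sum.cartesian_product' kron_id_def by (intro sum.cong refl) auto
  also have "\<dots> = (\<Sum>i\<in>A. \<Sum>x\<in>D. \<Sum>j\<in>A. M (i,x) (j,x) * N j i)"
    using assms by simp
  also have "\<dots> = (\<Sum>i\<in>A. \<Sum>j\<in>A. \<Sum>x\<in>D. M (i,x) (j,x) * N j i)"
    by (intro sum.cong refl) (rule sum.swap)
  finally show ?thesis
    unfolding trace_prod_def ptrace2_def by (simp add: sum_distrib_right)
qed

lemma trace_prod_diff_kernel:
  "trace_prod S M (\<lambda>p q. c * N p q - N' p q) = c * trace_prod S M N - trace_prod S M N'"
  by (simp add: trace_prod_def algebra_simps sum_subtractf sum_distrib_left)

lemma trace_prod_le_card_ptrace2:
  assumes "finite A" "finite D" "D \<noteq> {}"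
    and "hermitian_on (A \<times> D) M" "psd_on (A \<times> D) M" "psd_on (A \<times> D) N"
  shows "Re (trace_prod (A \<times> D) M N) \<le> card A * Re (trace_prod A (ptrace2 D M) (ptrace2 D N))"
proof -
  define K where "K = (\<lambda>p q. of_nat (card A) * kron_id (ptrace2 D N) p q - N p q)"
  have "psd_on (A \<times> D) K"
    unfolding psd_on_def K_def sesq_diff_kernel
    using psd_on_le_card_kron_id_ptrace2[OF assms(1-3,6)] by simp
  then have "0 \<le> Re (trace_prod (A \<times> D) M K)"
    using trace_prod_nonneg[OF finite_cartesian_product[OF assms(1,2)]] assms(4,5) by blast
  then show ?thesis
    unfolding K_def trace_prod_diff_kernel trace_prod_kron_id[OF assms(2)] by simp
qed

section \<open>Matrices on tensor products\<close>

lemma pair_index_less: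
  fixes i x :: nat
  assumes "i < m" "x < d"
  shows "i * d + x < m * d"
proof -
  have "i * d + x < (i + 1) * d" using assms by simp
  also have "\<dots> \<le> m * d" using assms by (intro mult_right_mono) auto
  finally show ?thesis .
qed

lemma pair_index_eq_iff:
  fixes i x j y :: nat
  assumes "x < d" "y < d"
  shows "i * d + x = j * d + y \<longleftrightarrow> i = j \<and> x = y"
proof
  assume "i * d + x = j * d + y"
  then have "(i * d + x) div d = (j * d + y) div d" "(i * d + x) mod d = (j * d + y) mod d" by simp_all
  then show "i = j \<and> x = y" using assms by simp
qed simp

lemma sum_lessThan_mult_pairs:
  fixes F :: "nat \<Rightarrow> 'a::comm_monoid_add"
  shows "(\<Sum>p<m * d. F p) = (\<Sum>i<m. \<Sum>x<d. F (i * d + x))"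
proof -
  have "(\<Sum>p\<in>{i * d..<i * d + d}. F p) = (\<Sum>x<d. F (i * d + x))" for i
    using sum.shift_bounds_nat_ivl[of F 0 "i * d" d] by (simp add: add.commute atLeast0LessThan)
  then show ?thesis using sum.nat_group[of F d m] by simp
qed

definition mat_kernel :: "nat \<Rightarrow> complex mat \<Rightarrow> nat \<times> nat \<Rightarrow> nat \<times> nat \<Rightarrow> complex" where
  "mat_kernel d X = (\<lambda>(i,x) (j,y). X $$ (i * d + x, j * d + y))"

lemma psd_mat_kernel:
  assumes "psd (m * d) X"
  shows "hermitian_on ({..<m} \<times> {..<d}) (mat_kernel d X)" "psd_on ({..<m} \<times> {..<d}) (mat_kernel d X)"
proof -
  have X: "X \<in> carrier_mat (m * d) (m * d)"
    and herm: "\<And>i j. i < m * d \<Longrightarrow> j < m * d \<Longrightarrow> X $$ (i,j) = cnj (X $$ (j,i))"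
    and psd: "\<And>v. v \<in> carrier_vec (m * d) \<Longrightarrow> 0 \<le> Re (conjugate v \<bullet> (X *\<^sub>v v))"
    using assms unfolding psd_def by blast+
  show "hermitian_on ({..<m} \<times> {..<d}) (mat_kernel d X)"
    unfolding hermitian_on_def mat_kernel_def
    by (auto intro!: herm pair_index_less)
  show "psd_on ({..<m} \<times> {..<d}) (mat_kernel d X)"
    unfolding psd_on_def
  proof
    fix v :: "nat \<times> nat \<Rightarrow> complex"
    define w where "w = vec (m * d) (\<lambda>p. v (p div d, p mod d))"
    have "conjugate w \<bullet> (X *\<^sub>v w)
        = (\<Sum>p<m * d. cnj (v (p div d, p mod d)) * (\<Sum>q<m * d. X $$ (p,q) * v (q div d, q mod d)))"
      unfolding scalar_prod_def w_def using X
      by (auto simp: mult_mat_vec_def atLeast0LessThan scalar_prod_def intro!: sum.cong)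
    also have "\<dots> = sesq ({..<m} \<times> {..<d}) (mat_kernel d X) v v"
      unfolding sesq_def sum.cartesian_product' sum_lessThan_mult_pairs mat_kernel_def
      by (auto simp: sum_distrib_left algebra_simps intro!: sum.cong)
    finally show "0 \<le> Re (sesq ({..<m} \<times> {..<d}) (mat_kernel d X) v v)"
      using psd[of w] by (simp add: w_def)
  qed
qed

lemma kron_carrier: "A \<in> carrier_mat n n \<Longrightarrow> B \<in> carrier_mat k k \<Longrightarrow> kron A B \<in> carrier_mat (n * k) (n * k)"
  unfolding kron_def by simp

lemma kron_index:
  assumes "A \<in> carrier_mat n n" "B \<in> carrier_mat k k" "p < n" "p' < n" "q < k" "q' < k"
  shows "kron A B $$ (p * k + q, p' * k + q') = A $$ (p,p') * B $$ (q,q')"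
  using assms pair_index_less[of p n q k] pair_index_less[of p' n q' k] unfolding kron_def by simp

lemma swap_op_carrier: "swap_op k \<in> carrier_mat (k * k) (k * k)"
  unfolding swap_op_def by simp

lemma swap_op_index:
  assumes "x < k" "y < k" "x' < k" "y' < k"
  shows "swap_op k $$ (x * k + y, x' * k + y') = (if x = y' \<and> y = x' then 1 else 0)"
  using assms pair_index_less[of x k y k] pair_index_less[of x' k y' k] unfolding swap_op_def by simp

lemma one_mat_pair_index:
  assumes "x < k" "y < k" "x' < k" "y' < k"
  shows "(1\<^sub>m (k * k) :: complex mat) $$ (x * k + y, x' * k + y') = (if x = x' \<and> y = y' then 1 else 0)"
  using assms pair_index_less[of x k y k] pair_index_less[of x' k y' k] by (simp add: pair_index_eq_iff)

lemma quad_index_eq_iff: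
  fixes a b c e a' b' c' e' :: nat
  assumes "b < k" "b' < k" "c < l" "c' < l" "e < n" "e' < n"
  shows "(a * k + b) * (l * n) + (c * n + e) = (a' * k + b') * (l * n) + (c' * n + e')
    \<longleftrightarrow> a = a' \<and> b = b' \<and> c = c' \<and> e = e'"
  using assms pair_index_less[of c l e n] pair_index_less[of c' l e' n]
  by (simp add: pair_index_eq_iff)

lemma quad_index_less:
  fixes a b c e :: nat
  assumes "a < k" "b < l" "c < p" "e < q"
  shows "(a * l + b) * (p * q) + (c * q + e) < k * l * (p * q)"
  using assms by (intro pair_index_less) (auto intro: pair_index_less)

lemma regroup_idx_quad:
  assumes "a1 < m" "b1 < m" "a2 < d" "b2 < d"
  shows "regroup_idx m d ((a1 * m + b1) * (d * d) + (a2 * d + b2)) = (a1 * d + a2) * (m * d) + (b1 * d + b2)"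
  using assms pair_index_less[of a1 m b1 m] pair_index_less[of a2 d b2 d]
  unfolding regroup_idx_def Let_def by simp

lemma quad_index_cases:
  fixes r m d :: nat
  assumes "r < m * m * (d * d)"
  obtains a1 b1 a2 b2 where "a1 < m" "b1 < m" "a2 < d" "b2 < d"
    "r = (a1 * m + b1) * (d * d) + (a2 * d + b2)"
proof -
  have "0 < m" "0 < d" using assms by (auto intro: Nat.gr0I)
  have "r div (d * d) < m * m" using assms by (simp add: less_mult_imp_div_less)
  then have "r div (d * d) div m < m" "r mod (d * d) div d < d"
    using \<open>0 < d\<close> by (simp_all add: less_mult_imp_div_less)
  moreover have "r = (r div (d * d) div m * m + r div (d * d) mod m) * (d * d) + (r mod (d * d) div d * d + r mod (d * d) mod d)"
    by (metis div_mult_mod_eq)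
  ultimately show thesis
    using that \<open>0 < m\<close> \<open>0 < d\<close> by (meson mod_less_divisor)
qed

lemma regroup_idx_eq_iff:
  assumes "r < m * m * (d * d)" "a1 < m" "b1 < m" "a2 < d" "b2 < d"
  shows "(a1 * d + a2) * (m * d) + (b1 * d + b2) = regroup_idx m d r
    \<longleftrightarrow> r = (a1 * m + b1) * (d * d) + (a2 * d + b2)"
proof -
  obtain a1' b1' a2' b2' where "a1' < m" "b1' < m" "a2' < d" "b2' < d"
    and r: "r = (a1' * m + b1') * (d * d) + (a2' * d + b2')"
    using quad_index_cases[OF assms(1)] by blast
  then show ?thesis
    using assms(2-5) by (auto simp: r regroup_idx_quad quad_index_eq_iff)
qed

lemma regroup_mat_row_sum:
  assumes "a1 < m" "b1 < m" "a2 < d" "b2 < d"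
  shows "(\<Sum>r<m * m * (d * d). regroup_mat m d $$ ((a1 * d + a2) * (m * d) + (b1 * d + b2), r) * f r)
    = f ((a1 * m + b1) * (d * d) + (a2 * d + b2))"
proof -
  have "(\<Sum>r<m * m * (d * d). regroup_mat m d $$ ((a1 * d + a2) * (m * d) + (b1 * d + b2), r) * f r)
      = (\<Sum>r<m * m * (d * d). if r = (a1 * m + b1) * (d * d) + (a2 * d + b2) then f r else 0)"
    using assms quad_index_less[of a1 m a2 d b1 m b2 d]
    by (intro sum.cong refl) (simp add: regroup_mat_def regroup_idx_eq_iff)
  then show ?thesis using assms quad_index_less[of a1 m b1 m a2 d b2 d] by simp
qed

lemma index_mult_mat_sum:
  assumes "A \<in> carrier_mat a b" "B \<in> carrier_mat b c" "i < a" "j < c"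
  shows "(A * B) $$ (i,j) = (\<Sum>k<b. A $$ (i,k) * B $$ (k,j))"
  using assms by (simp add: index_mult_mat scalar_prod_def atLeast0LessThan)

lemma regroup_index:
  assumes X: "X \<in> carrier_mat (m * m * (d * d)) (m * m * (d * d))"
    and a: "a1 < m" "a2 < d" "b1 < m" "b2 < d" and a': "a1' < m" "a2' < d" "b1' < m" "b2' < d"
  shows "regroup m d X $$ ((a1 * d + a2) * (m * d) + (b1 * d + b2), (a1' * d + a2') * (m * d) + (b1' * d + b2'))
     = X $$ ((a1 * m + b1) * (d * d) + (a2 * d + b2), (a1' * m + b1') * (d * d) + (a2' * d + b2'))"
proof -
  define R where "R = regroup_mat m d"
  define n where "n = m * m * (d * d)"
  define s where "s = (a1 * d + a2) * (m * d) + (b1 * d + b2)"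
  define s' where "s' = (a1' * d + a2') * (m * d) + (b1' * d + b2')"
  have R: "R \<in> carrier_mat (m * d * (m * d)) n" unfolding R_def n_def regroup_mat_def by simp
  have s: "s < m * d * (m * d)" "s' < m * d * (m * d)"
    unfolding s_def s'_def using a a' quad_index_less by auto
  have RX: "(R * X) $$ (s,k) = X $$ ((a1 * m + b1) * (d * d) + (a2 * d + b2), k)" if "k < n" for k
    using index_mult_mat_sum[OF R X[folded n_def] s(1) that] regroup_mat_row_sum[OF a(1,3,2,4)]
    unfolding R_def n_def s_def by simp
  have "regroup m d X $$ (s,s') = (\<Sum>k<n. (R * X) $$ (s,k) * transpose_mat R $$ (k,s'))"
    unfolding regroup_def R_def[symmetric] by (rule index_mult_mat_sum) (use R X s n_def in auto)
  also have "\<dots> = (\<Sum>k<n. (R * X) $$ (s,k) * R $$ (s',k))"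
    using R s by (intro sum.cong refl) auto
  also have "\<dots> = (\<Sum>k<n. R $$ (s',k) * X $$ ((a1 * m + b1) * (d * d) + (a2 * d + b2), k))"
    by (intro sum.cong refl) (simp add: RX)
  also have "\<dots> = X $$ ((a1 * m + b1) * (d * d) + (a2 * d + b2), (a1' * m + b1') * (d * d) + (a2' * d + b2'))"
    unfolding R_def n_def s'_def by (rule regroup_mat_row_sum[OF a'(1,3,2,4)])
  finally show ?thesis unfolding s_def s'_def .
qed

lemma rho_op_index:
  assumes a: "a1 < m" "a2 < d" "b1 < m" "b2 < d" and a': "a1' < m" "a2' < d" "b1' < m" "b2' < d"
  shows "rho_op m d \<epsilon> \<delta> $$ ((a1 * d + a2) * (m * d) + (b1 * d + b2), (a1' * d + a2') * (m * d) + (b1' * d + b2'))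
    = of_bool (a1 = a1' \<and> b1 = b1') * of_bool (a2 = a2' \<and> b2 = b2')
    + of_real ((real d * \<epsilon> - 1) / real d) * (of_bool (a1 = a1' \<and> b1 = b1') * of_bool (a2 = b2' \<and> b2 = a2'))
    + of_real ((real m * \<epsilon> - 1) / real m) * (of_bool (a1 = b1' \<and> b1 = a1') * of_bool (a2 = a2' \<and> b2 = b2'))
    + of_real ((1 - (real m + real d) * \<epsilon> + real d * real m * \<delta>) / (real d * real m))
        * (of_bool (a1 = b1' \<and> b1 = a1') * of_bool (a2 = b2' \<and> b2 = a2'))"
proof -
  let ?r = "(a1 * m + b1) * (d * d) + (a2 * d + b2)" and ?r' = "(a1' * m + b1') * (d * d) + (a2' * d + b2')"
  have p: "a1 * m + b1 < m * m" "a1' * m + b1' < m * m" "a2 * d + b2 < d * d" "a2' * d + b2' < d * d"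
    using a a' pair_index_less by auto
  have r: "?r < m * m * (d * d)" "?r' < m * m * (d * d)" using p pair_index_less by auto
  have one: "(1\<^sub>m (k * k) :: complex mat) \<in> carrier_mat (k * k) (k * k)" for k by simp
  have kron: "kron (1\<^sub>m (m * m)) (1\<^sub>m (d * d)) $$ (?r, ?r') = of_bool (a1 = a1' \<and> b1 = b1') * of_bool (a2 = a2' \<and> b2 = b2')"
    "kron (1\<^sub>m (m * m)) (swap_op d) $$ (?r, ?r') = of_bool (a1 = a1' \<and> b1 = b1') * of_bool (a2 = b2' \<and> b2 = a2')"
    "kron (swap_op m) (1\<^sub>m (d * d)) $$ (?r, ?r') = of_bool (a1 = b1' \<and> b1 = a1') * of_bool (a2 = a2' \<and> b2 = b2')"
    "kron (swap_op m) (swap_op d) $$ (?r, ?r') = of_bool (a1 = b1' \<and> b1 = a1') * of_bool (a2 = b2' \<and> b2 = a2')"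
    by (subst kron_index[OF _ _ p], (rule one swap_op_carrier)+,
        simp add: one_mat_pair_index swap_op_index a a')+
  have dims: "dim_row (kron X Y) = dim_row X * dim_row Y" "dim_col (kron X Y) = dim_col X * dim_col Y"
    "dim_row (swap_op k) = k * k" "dim_col (swap_op k) = k * k" for X Y k
    unfolding kron_def swap_op_def by simp_all
  have "rho_op m d \<epsilon> \<delta> $$ ((a1 * d + a2) * (m * d) + (b1 * d + b2), (a1' * d + a2') * (m * d) + (b1' * d + b2'))
      = (kron (1\<^sub>m (m * m)) (1\<^sub>m (d * d))
        + complex_of_real ((real d * \<epsilon> - 1) / real d) \<cdot>\<^sub>m kron (1\<^sub>m (m * m)) (swap_op d)
        + complex_of_real ((real m * \<epsilon> - 1) / real m) \<cdot>\<^sub>m kron (swap_op m) (1\<^sub>m (d * d))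
        + complex_of_real ((1 - (real m + real d) * \<epsilon> + real d * real m * \<delta>) / (real d * real m)) \<cdot>\<^sub>m kron (swap_op m) (swap_op d)) $$ (?r, ?r')"
    unfolding rho_op_def
    by (rule regroup_index[OF _ a a']) (intro add_carrier_mat smult_carrier_mat kron_carrier one swap_op_carrier)
  then show ?thesis using r by (simp add: dims kron del: One_nat_def)
qed

section \<open>The witness\<close>

text \<open>\<open>swap_trace n X = tr (X F)\<close> for the swap \<open>F\<close> of the two factors of \<open>\<complex>\<^sup>n \<otimes> \<complex>\<^sup>n\<close>, and
  \<open>partial_swap_trace m d X = tr (X (F\<^sub>m \<otimes> \<one>\<^sub>d))\<close> on \<open>H\<^sub>A \<otimes> H\<^sub>B\<close>.\<close>
definition swap_trace :: "nat \<Rightarrow> complex mat \<Rightarrow> complex" where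
  "swap_trace n X = (\<Sum>p<n. \<Sum>q<n. X $$ (p * n + q, q * n + p))"

definition partial_swap_trace :: "nat \<Rightarrow> nat \<Rightarrow> complex mat \<Rightarrow> complex" where
  "partial_swap_trace m d X = (\<Sum>a1<m. \<Sum>a2<d. \<Sum>b1<m. \<Sum>b2<d.
     X $$ ((a1 * d + a2) * (m * d) + (b1 * d + b2), (b1 * d + a2) * (m * d) + (a1 * d + b2)))"

definition witness :: "nat \<Rightarrow> nat \<Rightarrow> complex mat \<Rightarrow> complex" where
  "witness m d X = of_nat m * partial_swap_trace m d X - swap_trace (m * d) X"

lemma witness_kron_nonneg:
  assumes "psd (m * d) A" "psd (m * d) B" "0 < d"
  shows "0 \<le> Re (witness m d (kron A B))"
proof -
  have A: "A \<in> carrier_mat (m * d) (m * d)" and B: "B \<in> carrier_mat (m * d) (m * d)"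
    using assms unfolding psd_def by auto
  have "swap_trace (m * d) (kron A B) = (\<Sum>p<m * d. \<Sum>q<m * d. A $$ (p,q) * B $$ (q,p))"
    unfolding swap_trace_def by (intro sum.cong refl) (simp add: kron_index[OF A B])
  also have "\<dots> = trace_prod ({..<m} \<times> {..<d}) (mat_kernel d A) (mat_kernel d B)"
    unfolding trace_prod_def sum_lessThan_mult_pairs sum.cartesian_product' mat_kernel_def by simp
  finally have swap: "swap_trace (m * d) (kron A B) = \<dots>" .
  have "partial_swap_trace m d (kron A B)
      = (\<Sum>a1<m. \<Sum>a2<d. \<Sum>b1<m. \<Sum>b2<d. mat_kernel d A (a1,a2) (b1,a2) * mat_kernel d B (b1,b2) (a1,b2))"
    unfolding partial_swap_trace_def mat_kernel_def
    by (intro sum.cong refl) (simp add: kron_index[OF A B] pair_index_less)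
  also have "\<dots> = (\<Sum>a1<m. \<Sum>b1<m. \<Sum>a2<d. \<Sum>b2<d. mat_kernel d A (a1,a2) (b1,a2) * mat_kernel d B (b1,b2) (a1,b2))"
    by (rule sum.cong[OF refl], rule sum.swap)
  also have "\<dots> = trace_prod {..<m} (ptrace2 {..<d} (mat_kernel d A)) (ptrace2 {..<d} (mat_kernel d B))"
    unfolding trace_prod_def ptrace2_def sum_product ..
  finally have pswap: "partial_swap_trace m d (kron A B) = \<dots>" .
  have "Re (trace_prod ({..<m} \<times> {..<d}) (mat_kernel d A) (mat_kernel d B))
      \<le> card {..<m} * Re (trace_prod {..<m} (ptrace2 {..<d} (mat_kernel d A)) (ptrace2 {..<d} (mat_kernel d B)))"
    using psd_mat_kernel[OF assms(1)] psd_mat_kernel[OF assms(2)] \<open>0 < d\<close>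
    by (intro trace_prod_le_card_ptrace2) auto
  then show ?thesis unfolding witness_def swap pswap by simp
qed

lemma witness_add:
  assumes "X \<in> carrier_mat (m * d * (m * d)) (m * d * (m * d))" "Y \<in> carrier_mat (m * d * (m * d)) (m * d * (m * d))"
  shows "witness m d (X + Y) = witness m d X + witness m d Y"
proof -
  have "swap_trace (m * d) (X + Y) = swap_trace (m * d) X + swap_trace (m * d) Y"
    unfolding swap_trace_def sum.distrib[symmetric]
    using assms pair_index_less[of _ "m * d" _ "m * d"] by (intro sum.cong refl) simp
  moreover have "partial_swap_trace m d (X + Y) = partial_swap_trace m d X + partial_swap_trace m d Y"
    unfolding partial_swap_trace_def sum.distrib[symmetric]
    using assms quad_index_less[of _ m _ d _ m _ d] by (intro sum.cong refl) simp
  ultimately show ?thesis unfolding witness_def by (simp add: algebra_simps)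
qed

lemma witness_zero: "witness m d (0\<^sub>m (m * d * (m * d)) (m * d * (m * d))) = 0"
proof -
  have "swap_trace (m * d) (0\<^sub>m (m * d * (m * d)) (m * d * (m * d))) = 0"
    unfolding swap_trace_def using pair_index_less[of _ "m * d" _ "m * d"]
    by (intro sum.neutral ballI) simp
  moreover have "partial_swap_trace m d (0\<^sub>m (m * d * (m * d)) (m * d * (m * d))) = 0"
    unfolding partial_swap_trace_def using quad_index_less[of _ m _ d _ m _ d]
    by (intro sum.neutral ballI) simp
  ultimately show ?thesis unfolding witness_def by simp
qed

lemma separable_witness_nonneg:
  assumes "separable (m * d) (m * d) X" "0 < d"
  shows "0 \<le> Re (witness m d X)"
proof -
  obtain xs where psd: "\<forall>(A,B) \<in> set xs. psd (m * d) A \<and> psd (m * d) B"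
    and X: "X = foldr (\<lambda>(A,B) acc. kron A B + acc) xs (0\<^sub>m (m * d * (m * d)) (m * d * (m * d)))"
    using assms(1) unfolding separable_def by blast
  have "X \<in> carrier_mat (m * d * (m * d)) (m * d * (m * d)) \<and> 0 \<le> Re (witness m d X)"
    using psd unfolding X
  proof (induction xs)
    case Nil
    then show ?case by (simp add: witness_zero)
  next
    case (Cons AB xs)
    obtain A B where AB: "AB = (A,B)" "psd (m * d) A" "psd (m * d) B"
      using Cons.prems by (cases AB) auto
    then have "kron A B \<in> carrier_mat (m * d * (m * d)) (m * d * (m * d))"
      unfolding psd_def by (auto intro: kron_carrier)
    then show ?case
      using Cons witness_add witness_kron_nonneg[OF AB(2,3) assms(2)] AB(1) by auto
  qed
  then show ?thesis ..
qed

lemma witness_rho_op: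
  assumes "0 < m" "0 < d"
  shows "Re (witness m d (rho_op m d \<epsilon> \<delta>))
    = m * (\<epsilon> * real m ^ 2 * (real d ^ 2 - 1) + real d * real m * \<delta> * (real m - real d))"
proof -
  define c1 where "c1 = (real d * \<epsilon> - 1) / real d"
  define c2 where "c2 = (real m * \<epsilon> - 1) / real m"
  define c3 where "c3 = (1 - (real m + real d) * \<epsilon> + real d * real m * \<delta>) / (real d * real m)"
  have "swap_trace (m * d) (rho_op m d \<epsilon> \<delta>) = (\<Sum>a1<m. \<Sum>a2<d. \<Sum>b1<m. \<Sum>b2<d.
      of_bool (a1 = b1) * of_bool (a2 = b2) + of_real c1 * of_bool (a1 = b1) + of_real c2 * of_bool (a2 = b2) + of_real c3)"
    unfolding swap_trace_def sum_lessThan_mult_pairs unfolding c1_def c2_def c3_def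
    by (intro sum.cong refl) (subst rho_op_index; auto)
  also have "\<dots> = of_real (m * d + c1 * (m * d * d) + c2 * (m * m * d) + c3 * (m * m * d * d))"
    by (simp add: sum.distrib algebra_simps flip: sum_distrib_left sum_distrib_right)
  finally have swap: "swap_trace (m * d) (rho_op m d \<epsilon> \<delta>) = \<dots>" .
  have "partial_swap_trace m d (rho_op m d \<epsilon> \<delta>) = (\<Sum>a1<m. \<Sum>a2<d. \<Sum>b1<m. \<Sum>b2<d.
      of_bool (a1 = b1) + of_real c1 * (of_bool (a1 = b1) * of_bool (a2 = b2)) + of_real c2 + of_real c3 * of_bool (a2 = b2))"
    unfolding partial_swap_trace_def unfolding c1_def c2_def c3_def
    by (intro sum.cong refl) (subst rho_op_index; auto)
  also have "\<dots> = of_real (m * d * d + c1 * (m * d) + c2 * (m * m * d * d) + c3 * (m * m * d))"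
    by (simp add: sum.distrib algebra_simps flip: sum_distrib_left sum_distrib_right)
  finally have pswap: "partial_swap_trace m d (rho_op m d \<epsilon> \<delta>) = \<dots>" .
  show ?thesis
    unfolding witness_def swap pswap c1_def c2_def c3_def
    using assms by (simp add: field_simps power2_eq_square)
qed

theorem mainTheorem6:
  fixes m d :: nat and \<epsilon> \<delta> :: real
  assumes "3 \<le> m" and "m < d"
    and "psd (m*d*(m*d)) (rho_op m d \<epsilon> \<delta>)"
    and "\<epsilon> * real m ^ 2 * (real d ^ 2 - 1) + real d * real m*\<delta>*(real m - real d) < 0"
  shows "\<not> separable (m*d) (m*d) (rho_op m d \<epsilon> \<delta>)"
proof
  assume "separable (m*d) (m*d) (rho_op m d \<epsilon> \<delta>)"
  then have "0 \<le> Re (witness m d (rho_op m d \<epsilon> \<delta>))"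
    using assms(2) by (intro separable_witness_nonneg) auto
  moreover have "Re (witness m d (rho_op m d \<epsilon> \<delta>)) < 0"
    using assms(1,2,4) by (simp add: witness_rho_op mult_pos_neg)
  ultimately show False by simp
qed

end
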